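(* Let $J^P_{k,n}$ be the number of maximal configurations resistant to predators of length $n$ with exactly $k$ occupied lots (the empty configuration of length $0$ being counted once). Then, as formal power series, $$\sum_{n\ge 0}\sum_{k\ge 0} J^P_{k,n}x^ky^n = \frac{1 + xy - (x - x^2)y^2 - x^2y^3}{1 - xy^2 - x^2y^3}.$$
   Context: A configuration of length $n\ge 0$ is a binary string $c_1c_2\cdots c_n$; $c_k=1$ means lot $k$ is occupied by a house, $c_k=0$ that it is empty. A house at position $k$ is blocked if $2\le k\le n-1$ and $c_{k-1}=c_{k+1}=1$ (lots beyond the ends never obstruct sunlight). A configuration is permissible if no house is blocked; maximal if it is permissible and, for every $k$ with $c_k=0$, setting $c_k=1$ yields a non-permissible string. A maximal configuration is resistant to predators if, for every $k$ with $c_k=0$, setting $c_k=1$ makes the new house at position $k$ blocked. *)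

theory Defs
  imports "HOL-Computational_Algebra.Formal_Power_Series"
begin

text \<open>Configurations are lists of booleans; list index i (0-based) is lot i+1.\<close>

definition blocked :: "bool list \<Rightarrow> nat \<Rightarrow> bool" where
  "blocked c i \<longleftrightarrow> i < length c \<and> c ! i \<and> 0 < i \<and> i + 1 < length c \<and> c ! (i - 1) \<and> c ! (i + 1)"

definition permissible :: "bool list \<Rightarrow> bool" where
  "permissible c \<longleftrightarrow> (\<forall>i < length c. \<not> blocked c i)"

definition maximal :: "bool list \<Rightarrow> bool" where
  "maximal c \<longleftrightarrow> permissible c \<and> (\<forall>i < length c. \<not> c ! i \<longrightarrow> \<not> permissible (c[i := True]))"

definition resistant :: "bool list \<Rightarrow> bool" where
  "resistant c \<longleftrightarrow> maximal c \<and> (\<forall>i < length c. \<not> c ! i \<longrightarrow> blocked (c[i := True]) i)"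

definition JP :: "nat \<Rightarrow> nat \<Rightarrow> nat" where
  "JP k n = card {c :: bool list. length c = n \<and> resistant c \<and> count_list c True = k}"

text \<open>Bivariate generating function: outer variable y (length n), inner variable x (houses k).\<close>
definition JP_gf :: "rat fps fps" where
  "JP_gf = Abs_fps (\<lambda>n. Abs_fps (\<lambda>k. of_nat (JP k n)))"

end

(*
  Filling an empty lot k blocks the new house only if 1 < k < n and both neighbours are
  occupied.  So a configuration is resistant iff it is permissible, starts with a house and
  has an occupied lot on both sides of every empty one; a nonempty resistant configuration is
  therefore a word in the blocks 1 and 11 separated by single 0s (no 111 and no 00).
  Reading off the first block gives, for the generating function N of the nonempty ones,
  N = x y + x^2 y^2 + (x y^2 + x^2 y^3) N, and the generating function of all of them is 1 + N.
*)

theory Submission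
  imports Defs
begin

unbundle fps_syntax

lemma blocked_Cons:
  "blocked (a # l) i \<longleftrightarrow> (i = 1 \<and> a \<and> 2 \<le> length l \<and> l ! 0 \<and> l ! 1) \<or> (0 < i \<and> blocked l (i - 1))"
  by (cases i) (auto simp: blocked_def nth_Cons')

lemma blocked_update_self:
  "blocked (c[i := True]) i \<longleftrightarrow> i < length c \<and> 0 < i \<and> i + 1 < length c \<and> c ! (i - 1) \<and> c ! (i + 1)"
  by (auto simp: blocked_def nth_list_update)

lemma permissible_iff_not_blocked: "permissible c \<longleftrightarrow> (\<forall>i. \<not> blocked c i)"
proof -
  have "blocked c i \<Longrightarrow> i < length c" for i
    by (simp add: blocked_def)
  then show ?thesis
    unfolding permissible_def by blast
qed

lemma permissible_Nil [simp]: "permissible []"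
  by (simp add: permissible_def)

lemma permissible_Cons [simp]:
  "permissible (a # l) \<longleftrightarrow> \<not> (a \<and> 2 \<le> length l \<and> l ! 0 \<and> l ! 1) \<and> permissible l"
  unfolding permissible_iff_not_blocked blocked_Cons by (metis diff_Suc_1 zero_less_Suc)

text \<open>The first lot is exempt from the left-neighbour condition, which makes \<open>flanked\<close>
  closed under taking suffixes.\<close>

definition flanked :: "bool list \<Rightarrow> bool" where
  "flanked c \<longleftrightarrow>
     (\<forall>i<length c. \<not> c ! i \<longrightarrow> i + 1 < length c \<and> c ! (i + 1) \<and> (0 < i \<longrightarrow> c ! (i - 1)))"

lemma flanked_Nil [simp]: "flanked []"
  by (simp add: flanked_def)

lemma flanked_Cons [simp]:
  "flanked (b # r) \<longleftrightarrow> (\<not> b \<longrightarrow> r \<noteq> [] \<and> hd r) \<and> (r \<noteq> [] \<and> \<not> hd r \<longrightarrow> b) \<and> flanked r"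
proof -
  have "flanked (b # r) \<longleftrightarrow> (\<not> b \<longrightarrow> r \<noteq> [] \<and> r ! 0) \<and>
      (\<forall>j<length r. \<not> r ! j \<longrightarrow> j + 1 < length r \<and> r ! (j + 1) \<and> (b # r) ! j)"
    unfolding flanked_def length_Cons All_less_Suc2 by simp
  also have "\<dots> \<longleftrightarrow> (\<not> b \<longrightarrow> r \<noteq> [] \<and> hd r) \<and> (r \<noteq> [] \<and> \<not> hd r \<longrightarrow> b) \<and> flanked r"
    unfolding flanked_def by (cases r) (auto simp: All_less_Suc2)
  finally show ?thesis .
qed

lemma resistant_iff_blocked:
  "resistant c \<longleftrightarrow> permissible c \<and> (\<forall>i<length c. \<not> c ! i \<longrightarrow> blocked (c[i := True]) i)"
proof -
  have "\<not> permissible (c[i := True])" if "blocked (c[i := True]) i" for i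
    using that unfolding permissible_iff_not_blocked by blast
  then show ?thesis
    unfolding resistant_def maximal_def by blast
qed

lemma resistant_iff:
  "resistant c \<longleftrightarrow> permissible c \<and> (c \<noteq> [] \<longrightarrow> hd c) \<and> flanked c"
proof -
  have "(\<forall>i<length c. \<not> c ! i \<longrightarrow> 0 < i \<and> i + 1 < length c \<and> c ! (i - 1) \<and> c ! (i + 1))
      \<longleftrightarrow> (c \<noteq> [] \<longrightarrow> c ! 0) \<and> flanked c"
    unfolding flanked_def by (metis gr0I length_greater_0_conv)
  then show ?thesis
    unfolding resistant_iff_blocked blocked_update_self by (simp add: hd_conv_nth)
qed

lemma resistant_Nil: "resistant []"
  and resistant_True: "resistant [True]"
  and resistant_True_True: "resistant [True, True]"
  and resistant_True_False_Cons: "resistant (True # False # r) \<longleftrightarrow> r \<noteq> [] \<and> resistant r"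
  and resistant_True_True_False_Cons: "resistant (True # True # False # r) \<longleftrightarrow> r \<noteq> [] \<and> resistant r"
  and not_resistant_False_Cons: "\<not> resistant (False # r)"
  and not_resistant_True_True_True_Cons: "\<not> resistant (True # True # True # r)"
  by (auto simp: resistant_iff)

lemma resistant_cases:
  assumes "resistant c" "c \<noteq> []"
  obtains "c = [True]" | "c = [True, True]"
  | r where "c = True # False # r" "r \<noteq> []" "resistant r"
  | r where "c = True # True # False # r" "r \<noteq> []" "resistant r"
  using assms
  by (metis (full_types) list.exhaust resistant_True_False_Cons resistant_True_True_False_Cons
      not_resistant_False_Cons not_resistant_True_True_True_Cons)

definition nonempty_resistant :: "nat \<Rightarrow> nat \<Rightarrow> bool list set" where
  "nonempty_resistant n k = {c. length c = n \<and> resistant c \<and> count_list c True = k \<and> c \<noteq> []}"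

lemma finite_nonempty_resistant: "finite (nonempty_resistant n k)"
proof (rule finite_subset)
  show "finite {c :: bool list. set c \<subseteq> UNIV \<and> length c = n}"
    by (rule finite_lists_length_eq) simp
qed (auto simp: nonempty_resistant_def)

lemma nonempty_resistant_0 [simp]: "nonempty_resistant 0 k = {}"
  by (auto simp: nonempty_resistant_def)

lemma JP_eq_card_nonempty_resistant:
  "JP k n = card (nonempty_resistant n k) + of_bool (n = 0 \<and> k = 0)"
proof -
  have split_Nil: "{c. length c = n \<and> resistant c \<and> count_list c True = k}
      = nonempty_resistant n k \<union> {c. c = [] \<and> n = 0 \<and> k = 0}"
    by (auto simp: nonempty_resistant_def resistant_Nil)
  show ?thesis
    unfolding JP_def split_Nil
    by (subst card_Un_disjoint) (use finite_nonempty_resistant in \<open>auto simp: nonempty_resistant_def\<close>)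
qed

lemma nonempty_resistant_decomp:
  "nonempty_resistant n k =
      {c. c = [True] \<and> n = 1 \<and> k = 1} \<union> {c. c = [True, True] \<and> n = 2 \<and> k = 2}
    \<union> (\<lambda>r. True # False # r) ` {r \<in> nonempty_resistant (n - 2) (k - 1). 2 \<le> n \<and> 1 \<le> k}
    \<union> (\<lambda>r. True # True # False # r) ` {r \<in> nonempty_resistant (n - 3) (k - 2). 3 \<le> n \<and> 2 \<le> k}"
  (is "_ = ?R")
proof
  show "nonempty_resistant n k \<subseteq> ?R"
  proof
    fix c assume "c \<in> nonempty_resistant n k"
    then have "resistant c" "c \<noteq> []" "length c = n" "count_list c True = k"
      by (auto simp: nonempty_resistant_def)
    then show "c \<in> ?R"
      by (cases rule: resistant_cases) (auto simp: nonempty_resistant_def)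
  qed
qed (auto simp: nonempty_resistant_def resistant_True resistant_True_True
      resistant_True_False_Cons resistant_True_True_False_Cons)

lemma card_nonempty_resistant:
  "card (nonempty_resistant n k) = of_bool (n = 1 \<and> k = 1) + of_bool (n = 2 \<and> k = 2)
    + (if 2 \<le> n \<and> 1 \<le> k then card (nonempty_resistant (n - 2) (k - 1)) else 0)
    + (if 3 \<le> n \<and> 2 \<le> k then card (nonempty_resistant (n - 3) (k - 2)) else 0)"
  unfolding nonempty_resistant_decomp[of n k]
  by (subst card_Un_disjoint; auto simp: card_image inj_on_def finite_nonempty_resistant)+

lemma fps_const_X_power_mult_X_power_nth:
  fixes F :: "'a::comm_ring_1 fps fps"
  shows "(fps_const (fps_X ^ a) * fps_X ^ b * F) $ n $ k =
    (if b \<le> n \<and> a \<le> k then F $ (n - b) $ (k - a) else 0)"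
proof -
  have "fps_const (fps_X ^ a) * fps_X ^ b * F = fps_X ^ b * (fps_const (fps_X ^ a) * F)"
    by (simp add: ac_simps)
  then show ?thesis
    by (simp only: fps_X_power_mult_nth fps_mult_left_const_nth) (auto simp: fps_X_power_mult_nth)
qed

definition nonempty_resistant_gf :: "rat fps fps" where
  "nonempty_resistant_gf = Abs_fps (\<lambda>n. Abs_fps (\<lambda>k. of_nat (card (nonempty_resistant n k))))"

lemma JP_gf_eq: "JP_gf = 1 + nonempty_resistant_gf"
  by (intro fps_ext) (simp add: JP_gf_def nonempty_resistant_gf_def JP_eq_card_nonempty_resistant)

lemma nonempty_resistant_gf_eq:
  defines "x \<equiv> fps_const fps_X" and "y \<equiv> fps_X"
  shows "nonempty_resistant_gf =
    x * y + x\<^sup>2 * y\<^sup>2 + (x * y\<^sup>2 + x\<^sup>2 * y ^ 3) * nonempty_resistant_gf"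
proof (intro fps_ext)
  fix n k
  have monomial: "(x ^ a * y ^ b * F) $ n $ k = (if b \<le> n \<and> a \<le> k then F $ (n - b) $ (k - a) else 0)"
    for a b F
    unfolding x_def y_def fps_const_power by (rule fps_const_X_power_mult_X_power_nth)
  show "nonempty_resistant_gf $ n $ k =
    (x * y + x\<^sup>2 * y\<^sup>2 + (x * y\<^sup>2 + x\<^sup>2 * y ^ 3) * nonempty_resistant_gf) $ n $ k"
    using monomial[of 1 1 1] monomial[of 2 2 1] monomial[of 1 2 nonempty_resistant_gf]
      monomial[of 2 3 nonempty_resistant_gf]
    by (simp add: distrib_right card_nonempty_resistant[of n k] nonempty_resistant_gf_def)
qed

lemma fps_fps_mult_inverse_eq_1:
  fixes f :: "'a::division_ring fps fps"
  assumes "f $ 0 = 1"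
  shows "f * inverse f = 1"
  using fps_right_inverse[of f 1] assms by (simp add: fps_inverse_def fps_lr_inverse_one_one)

theorem mainTheorem4:
  fixes x y :: "rat fps fps"
  assumes "x = fps_const fps_X" and "y = fps_X"
  shows "JP_gf = (1 + x * y - (x - x ^ 2) * y ^ 2 - x ^ 2 * y ^ 3) * inverse (1 - x * y ^ 2 - x ^ 2 * y ^ 3)"
proof -
  define N where "N = nonempty_resistant_gf"
  define D where "D = 1 - x * y ^ 2 - x ^ 2 * y ^ 3"
  have N_eq: "N = x * y + x ^ 2 * y ^ 2 + (x * y ^ 2 + x ^ 2 * y ^ 3) * N"
    unfolding N_def assms by (rule nonempty_resistant_gf_eq)
  have "N * D = N - (x * y ^ 2 + x ^ 2 * y ^ 3) * N"
    unfolding D_def by (simp add: algebra_simps)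
  also have "\<dots> = x * y + x ^ 2 * y ^ 2"
    by (subst (1) N_eq) simp
  finally have "JP_gf * D = 1 + x * y - (x - x ^ 2) * y ^ 2 - x ^ 2 * y ^ 3"
    unfolding JP_gf_eq N_def[symmetric] D_def by (simp add: algebra_simps)
  moreover have "D * inverse D = 1"
    by (rule fps_fps_mult_inverse_eq_1) (simp add: D_def assms)
  ultimately show ?thesis
    unfolding D_def by (metis mult.assoc mult.right_neutral)
qed

end
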